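(* Let $X$ be a finite metric space with points labelled $x_1,\dots,x_m$, and regard its isometry group $\mathrm{Iso}(X)$ as a subgroup of the symmetric group $\mathfrak{S}_m$. Then the following assignment is a well-defined bijection $$\mathcal{L}(X)\;\longrightarrow\;\Big(\bigsqcup_{\substack{(r_1,\dots,r_m)\\ r_i\ge1,\ n=\sum r_i}}\mathrm{Met}_n/(\mathfrak{S}_{r_1}\times\cdots\times\mathfrak{S}_{r_m})\Big)\Big/\mathrm{Iso}(X):$$ given a line along a surjection $f\colon Y\to X$ with $\#Y=n$, set $r_i=\#f^{-1}(x_i)$, label the points of $Y$ so that $f^{-1}(x_i)=\{y_i^1,\dots,y_i^{r_i}\}$, and send the line to the class of the distance matrix of $Y$ with respect to the ordering $(y_1^1,\dots,y_1^{r_1},\dots,y_m^1,\dots,y_m^{r_m})$, in the component indexed by $(r_1,\dots,r_m)$. Here the tuple $(r_1,\dots,r_m)$ partitions the rows and columns of each matrix in $\mathrm{Met}_n$ into $m$ consecutive sections of sizes $r_1,\dots,r_m$; the factor $\mathfrak{S}_{r_i}$ acts by simultaneously permuting the rows and columns within the $i$-th section; and $\mathrm{Iso}(X)$ acts by permuting the sections (an element $\rho$ moving section $i$ to position $\rho(i)$, with the tuple $(r_1,\dots,r_m)$ permuted accordingly).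
   Context: For finite metric spaces $(X,d_X)$, $(Y,d_Y)$ and a surjection $f\colon Y\to X$, the line from $Y$ to $X$ along $f$ is the family $(Y_{f,t})_{0<t\le1}$ of metric spaces $Y_{f,t}=(Y,d_{f,t})$, $d_{f,t}(y,y')=t\,d_Y(y,y')+(1-t)\,d_X(f(y),f(y'))$. The set of lines to $X$, $\mathcal{L}(X)$, is the set of all such lines (over all finite metric spaces $Y$ and all surjections $f\colon Y\to X$) modulo the relation: $(Y_{f,t})\sim(Y_{g,t})$ (for $f,g\colon Y\to X$) if there exist isometries $h\colon Y\to Y$ and $k\colon X\to X$ with $k\circ f=g\circ h$. $\mathrm{Met}_n$ is the set of real $n\times n$ matrices $(d_{ij})$ with $d_{ii}=0$, $d_{ij}=d_{ji}>0$ for $i\neq j$, and $d_{ij}+d_{jk}\ge d_{ik}$ for all $i,j,k$ (i.e. distance matrices of ordered $n$-point metric spaces). *)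

theory Defs
  imports Complex_Main
begin

definition metric_on :: "'a set \<Rightarrow> ('a \<Rightarrow> 'a \<Rightarrow> real) \<Rightarrow> bool" where
  "metric_on S d \<longleftrightarrow>
     (\<forall>x\<in>S. d x x = 0) \<and>
     (\<forall>x\<in>S. \<forall>y\<in>S. x \<noteq> y \<longrightarrow> d x y > 0) \<and>
     (\<forall>x\<in>S. \<forall>y\<in>S. d x y = d y x) \<and>
     (\<forall>x\<in>S. \<forall>y\<in>S. \<forall>z\<in>S. d x z \<le> d x y + d y z)"

text \<open>X is the metric space with points x_1..x_m, represented by the indices 0..m-1
  and distance dX. Isometries of X (elements of Iso(X), viewed inside the symmetric group).\<close>
definition isoX :: "nat \<Rightarrow> (nat \<Rightarrow> nat \<Rightarrow> real) \<Rightarrow> (nat \<Rightarrow> nat) \<Rightarrow> bool" where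
  "isoX m dX k \<longleftrightarrow> bij_betw k {..<m} {..<m} \<and>
     (\<forall>i<m. \<forall>j<m. dX (k i) (k j) = dX i j)"

definition is_line :: "nat \<Rightarrow> 'a set \<Rightarrow> ('a \<Rightarrow> 'a \<Rightarrow> real) \<Rightarrow> ('a \<Rightarrow> nat) \<Rightarrow> bool" where
  "is_line m Y dY f \<longleftrightarrow> finite Y \<and> metric_on Y dY \<and> f ` Y = {..<m}"

definition line_equiv :: "nat \<Rightarrow> (nat \<Rightarrow> nat \<Rightarrow> real) \<Rightarrow>
    'a set \<Rightarrow> ('a \<Rightarrow> 'a \<Rightarrow> real) \<Rightarrow> ('a \<Rightarrow> nat) \<Rightarrow>
    'b set \<Rightarrow> ('b \<Rightarrow> 'b \<Rightarrow> real) \<Rightarrow> ('b \<Rightarrow> nat) \<Rightarrow> bool" where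
  "line_equiv m dX Y dY f Y' dY' f' \<longleftrightarrow>
     (\<exists>h k. bij_betw h Y Y' \<and> (\<forall>y\<in>Y. \<forall>z\<in>Y. dY' (h y) (h z) = dY y z) \<and>
            isoX m dX k \<and> (\<forall>y\<in>Y. k (f y) = f' (h y)))"

text \<open>Met_n, with n\<times>n matrices represented as functions padded by 0 outside the index range.\<close>
definition Met :: "nat \<Rightarrow> (nat \<Rightarrow> nat \<Rightarrow> real) set" where
  "Met n = {D. (\<forall>i j. \<not> (i < n \<and> j < n) \<longrightarrow> D i j = 0) \<and>
               (\<forall>i<n. D i i = 0) \<and>
               (\<forall>i<n. \<forall>j<n. i \<noteq> j \<longrightarrow> D i j > 0 \<and> D i j = D j i) \<and>
               (\<forall>i<n. \<forall>j<n. \<forall>k<n. D i j + D j k \<ge> D i k)}"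

text \<open>Sections determined by a tuple r = (r_1,...,r_m) (0-indexed).\<close>
definition off :: "nat list \<Rightarrow> nat \<Rightarrow> nat" where
  "off r i = sum_list (take i r)"

definition sect :: "nat list \<Rightarrow> nat \<Rightarrow> nat set" where
  "sect r i = {off r i ..< off r i + r ! i}"

definition target_elem :: "nat \<Rightarrow> nat list \<Rightarrow> (nat \<Rightarrow> nat \<Rightarrow> real) \<Rightarrow> bool" where
  "target_elem m r D \<longleftrightarrow> length r = m \<and> (\<forall>i<m. r ! i \<ge> 1) \<and> D \<in> Met (sum_list r)"

definition sect_equiv :: "nat \<Rightarrow> nat list \<Rightarrow> (nat \<Rightarrow> nat \<Rightarrow> real) \<Rightarrow> (nat \<Rightarrow> nat \<Rightarrow> real) \<Rightarrow> bool" where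
  "sect_equiv m r D D' \<longleftrightarrow>
     (\<exists>\<sigma>. bij_betw \<sigma> {..<sum_list r} {..<sum_list r} \<and>
          (\<forall>i<m. \<sigma> ` sect r i = sect r i) \<and>
          (\<forall>p q. D' p q = (if p < sum_list r \<and> q < sum_list r then D (\<sigma> p) (\<sigma> q) else 0)))"

definition iso_moves :: "nat \<Rightarrow> (nat \<Rightarrow> nat) \<Rightarrow> nat list \<Rightarrow> (nat \<Rightarrow> nat \<Rightarrow> real)
    \<Rightarrow> nat list \<Rightarrow> (nat \<Rightarrow> nat \<Rightarrow> real) \<Rightarrow> bool" where
  "iso_moves m \<rho> r D r' D' \<longleftrightarrow>
     length r' = m \<and> (\<forall>i<m. r' ! (\<rho> i) = r ! i) \<and>
     (\<forall>p q. \<not> (p < sum_list r' \<and> q < sum_list r') \<longrightarrow> D' p q = 0) \<and>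
     (\<forall>i<m. \<forall>j<m. \<forall>a<r ! i. \<forall>b<r ! j.
        D' (off r' (\<rho> i) + a) (off r' (\<rho> j) + b) = D (off r i + a) (off r j + b))"

text \<open>Equality in (\<Squnion> Met_n/(S_{r_1}\<times>...\<times>S_{r_m}))/Iso(X): the Iso(X)-action on
  section-classes relates the two classes.\<close>
definition target_rel :: "nat \<Rightarrow> (nat \<Rightarrow> nat \<Rightarrow> real) \<Rightarrow> nat list \<Rightarrow> (nat \<Rightarrow> nat \<Rightarrow> real)
    \<Rightarrow> nat list \<Rightarrow> (nat \<Rightarrow> nat \<Rightarrow> real) \<Rightarrow> bool" where
  "target_rel m dX r D r' D' \<longleftrightarrow>
     (\<exists>\<rho> D1 D2. isoX m dX \<rho> \<and> sect_equiv m r D D1 \<and> sect_equiv m r' D' D2 \<and>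
                iso_moves m \<rho> r D1 r' D2)"

definition fiber_sizes :: "nat \<Rightarrow> 'a set \<Rightarrow> ('a \<Rightarrow> nat) \<Rightarrow> nat list" where
  "fiber_sizes m Y f = map (\<lambda>i. card {y\<in>Y. f y = i}) [0..<m]"

definition labelling :: "nat \<Rightarrow> 'a set \<Rightarrow> ('a \<Rightarrow> nat) \<Rightarrow> (nat \<Rightarrow> 'a) \<Rightarrow> bool" where
  "labelling m Y f l \<longleftrightarrow>
     bij_betw l {..<sum_list (fiber_sizes m Y f)} Y \<and>
     (\<forall>i<m. l ` sect (fiber_sizes m Y f) i = {y\<in>Y. f y = i})"

definition dist_matrix :: "nat \<Rightarrow> ('a \<Rightarrow> 'a \<Rightarrow> real) \<Rightarrow> (nat \<Rightarrow> 'a) \<Rightarrow> nat \<Rightarrow> nat \<Rightarrow> real" where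
  "dist_matrix n dY l = (\<lambda>p q. if p < n \<and> q < n then dY (l p) (l q) else 0)"

end

theory Submission
  imports Defs "HOL-Library.Disjoint_Sets"
begin

text \<open>
  The equivalence of lines and the relation on classes of matrices both amount to the
  existence of a pair \<open>(\<rho>, \<pi>)\<close>:
  an isometry \<open>\<rho>\<close> of \<open>X\<close> and a bijection \<open>\<pi>\<close> of indices carrying the \<open>i\<close>-th section of the
  first tuple onto the \<open>\<rho>(i)\<close>-th section of the second, along which the two distance matrices
  agree (\<open>sect_bij\<close> together with a distance condition).
  On the matrix side, the permutations within sections are absorbed into \<open>\<pi>\<close>, and the
  \<open>Iso(X)\<close>-action is the rigid translation of sections \<open>sect_shift\<close>.
  On the side of lines, \<open>\<pi>\<close> corresponds to the isometry \<open>l' \<circ> \<pi> \<circ> l\<^sup>-\<^sup>1\<close> of the total spaces,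
  which covers \<open>\<rho>\<close> because labellings map sections onto fibres.
  Surjectivity is witnessed by the line on \<open>{..<n}\<close> with the given matrix as metric and the
  section index as projection.
\<close>

lemma off_Suc: "i < length r \<Longrightarrow> off r (Suc i) = off r i + r ! i"
  by (simp add: off_def take_Suc_conv_app_nth)

lemma card_sect [simp]: "card (sect r i) = r ! i"
  by (simp add: sect_def)

lemma UN_sect_lessThan_off: "k \<le> length r \<Longrightarrow> (\<Union>i<k. sect r i) = {..<off r k}"
proof (induction k)
  case 0
  then show ?case by (simp add: off_def)
next
  case (Suc k)
  then have "(\<Union>i<Suc k. sect r i) = {..<off r k} \<union> {off r k..<off r k + r ! k}"
    by (simp add: lessThan_Suc sect_def Un_commute)
  also have "\<dots> = {..<off r (Suc k)}"
    using Suc.prems by (auto simp: off_Suc)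
  finally show ?case .
qed

lemma UN_sect: "(\<Union>i<length r. sect r i) = {..<sum_list r}"
  using UN_sect_lessThan_off[of "length r" r] by (simp add: off_def)

lemma sect_subset: "i < length r \<Longrightarrow> sect r i \<subseteq> {..<sum_list r}"
  using UN_sect[of r] by blast

lemma off_add_less_sum_list:
  assumes "i < length r" "a < r ! i"
  shows "off r i + a < sum_list r"
proof -
  have "off r i + a \<in> sect r i"
    using assms(2) by (simp add: sect_def)
  then show ?thesis
    using sect_subset[OF assms(1)] by blast
qed

lemma sect_disjoint:
  assumes "i < length r" "j < length r" "i \<noteq> j"
  shows "sect r i \<inter> sect r j = {}"
proof -
  have disj: "sect r i \<inter> sect r j = {}" if "i < j" "j < length r" for i j
  proof -
    have "sect r i \<subseteq> {..<off r j}"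
      using UN_sect_lessThan_off[of j r] that by auto
    moreover have "sect r j \<subseteq> {off r j..}"
      by (auto simp: sect_def)
    ultimately show ?thesis by fastforce
  qed
  show ?thesis
    using assms disj[of i j] disj[of j i] by (cases "i < j") auto
qed

definition sect_index :: "nat list \<Rightarrow> nat \<Rightarrow> nat" where
  "sect_index r p = (THE i. i < length r \<and> p \<in> sect r i)"

lemma sect_index_eq: "i < length r \<Longrightarrow> p \<in> sect r i \<Longrightarrow> sect_index r p = i"
  unfolding sect_index_def by (rule the_equality) (use sect_disjoint in blast)+

lemma sect_index:
  assumes "p < sum_list r"
  shows "sect_index r p < length r" and "p \<in> sect r (sect_index r p)"
proof -
  obtain i where "i < length r" "p \<in> sect r i"
    using assms UN_sect[of r] by blast
  then show "sect_index r p < length r" "p \<in> sect r (sect_index r p)"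
    using sect_index_eq by auto
qed

lemma sect_offsetE:
  assumes "p < sum_list r"
  obtains i a where "i < length r" "a < r ! i" "p = off r i + a"
  using sect_index[OF assms] that[of "sect_index r p" "p - off r (sect_index r p)"]
  by (auto simp: sect_def)

definition sect_bij :: "nat \<Rightarrow> nat list \<Rightarrow> nat list \<Rightarrow> (nat \<Rightarrow> nat) \<Rightarrow> (nat \<Rightarrow> nat) \<Rightarrow> bool" where
  "sect_bij m r r' \<rho> \<pi> \<longleftrightarrow> (\<forall>i<m. bij_betw \<pi> (sect r i) (sect r' (\<rho> i)))"

lemma sect_bij_nth: "sect_bij m r r' \<rho> \<pi> \<Longrightarrow> i < m \<Longrightarrow> r' ! \<rho> i = r ! i"
  unfolding sect_bij_def by (metis bij_betw_same_card card_sect)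

lemma sect_bij_bij_betw:
  assumes "length r = m" "length r' = m" and \<rho>: "bij_betw \<rho> {..<m} {..<m}"
    and \<pi>: "sect_bij m r r' \<rho> \<pi>"
  shows "bij_betw \<pi> {..<sum_list r} {..<sum_list r'}"
proof -
  have "sect r' (\<rho> i) \<inter> sect r' (\<rho> j) = {}" if "i < m" "j < m" "i \<noteq> j" for i j
  proof -
    have "\<rho> i < m" "\<rho> j < m" "\<rho> i \<noteq> \<rho> j"
      using that \<rho> by (auto simp: bij_betw_def inj_on_def)
    then show ?thesis
      using sect_disjoint assms(2) by blast
  qed
  then have "disjoint_family_on (\<lambda>i. sect r' (\<rho> i)) {..<m}"
    by (auto simp: disjoint_family_on_def)
  then have "bij_betw \<pi> (\<Union>i<m. sect r i) (\<Union>i<m. sect r' (\<rho> i))"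
    by (rule bij_betw_UNION_disjoint) (use \<pi> in \<open>simp add: sect_bij_def\<close>)
  moreover have "(\<Union>i<m. sect r' (\<rho> i)) = (\<Union>j\<in>\<rho> ` {..<m}. sect r' j)"
    by simp
  ultimately show ?thesis
    using UN_sect[of r] UN_sect[of r'] bij_betw_imp_surj_on[OF \<rho>] assms(1,2) by simp
qed

lemma sect_bij_inv_into:
  assumes "bij_betw \<pi> {..<sum_list r} {..<sum_list r'}" "length r = m"
    and "sect_bij m r r' \<rho> \<pi>" "i < m"
  shows "bij_betw (inv_into {..<sum_list r} \<pi>) (sect r' (\<rho> i)) (sect r i)"
proof -
  have "\<pi> ` sect r i = sect r' (\<rho> i)"
    using assms(3,4) bij_betw_imp_surj_on unfolding sect_bij_def by blast
  then show ?thesis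
    using bij_betw_inv_into_subset[OF assms(1) sect_subset] assms(2,4) by simp
qed

lemma sect_bij_comp:
  assumes "sect_bij m r r' \<rho> \<pi>" "sect_bij m r' r'' \<rho>' \<pi>'" "\<forall>i<m. \<rho> i < m"
  shows "sect_bij m r r'' (\<rho>' \<circ> \<rho>) (\<pi>' \<circ> \<pi>)"
  unfolding sect_bij_def
proof (intro allI impI)
  fix i assume "i < m"
  then have "bij_betw \<pi> (sect r i) (sect r' (\<rho> i))"
    and "bij_betw \<pi>' (sect r' (\<rho> i)) (sect r'' (\<rho>' (\<rho> i)))"
    using assms unfolding sect_bij_def by simp_all
  then have "bij_betw (\<pi>' \<circ> \<pi>) (sect r i) (sect r'' (\<rho>' (\<rho> i)))"
    by (rule bij_betw_trans)
  then show "bij_betw (\<pi>' \<circ> \<pi>) (sect r i) (sect r'' ((\<rho>' \<circ> \<rho>) i))"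
    by simp
qed

lemma bij_betw_shift_atLeastLessThan:
  "bij_betw (\<lambda>p. p - a + b) {a..<a + c} {b..<b + (c::nat)}"
  by (rule bij_betw_byWitness[where f' = "\<lambda>q. q - b + a"]) auto

definition sect_shift :: "nat list \<Rightarrow> nat list \<Rightarrow> (nat \<Rightarrow> nat) \<Rightarrow> nat \<Rightarrow> nat" where
  "sect_shift r r' \<rho> p = p - off r (sect_index r p) + off r' (\<rho> (sect_index r p))"

lemma sect_shift_off:
  "i < length r \<Longrightarrow> a < r ! i \<Longrightarrow> sect_shift r r' \<rho> (off r i + a) = off r' (\<rho> i) + a"
  using sect_index_eq[of i r "off r i + a"] by (simp add: sect_shift_def sect_def)

lemma sect_bij_sect_shift:
  assumes "length r = m" and "\<forall>i<m. r' ! \<rho> i = r ! i"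
  shows "sect_bij m r r' \<rho> (sect_shift r r' \<rho>)"
  unfolding sect_bij_def
proof (intro allI impI)
  fix i assume i: "i < m"
  let ?t = "\<lambda>p. p - off r i + off r' (\<rho> i)"
  have "r' ! \<rho> i = r ! i"
    using assms(2) i by blast
  then have t: "bij_betw ?t (sect r i) (sect r' (\<rho> i))"
    unfolding sect_def by (metis bij_betw_shift_atLeastLessThan)
  have eq: "sect_shift r r' \<rho> p = ?t p" if "p \<in> sect r i" for p
  proof -
    have "sect_index r p = i"
      using sect_index_eq that i assms(1) by blast
    then show ?thesis
      by (simp add: sect_shift_def)
  qed
  show "bij_betw (sect_shift r r' \<rho>) (sect r i) (sect r' (\<rho> i))"
    by (rule bij_betw_cong[THEN iffD2, OF eq t])
qed

lemma iso_moves_sect_shift: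
  assumes "iso_moves m \<rho> r D r' D'" "length r = m" "p < sum_list r" "q < sum_list r"
  shows "D' (sect_shift r r' \<rho> p) (sect_shift r r' \<rho> q) = D p q"
proof -
  obtain i a where i: "i < m" "a < r ! i" "p = off r i + a"
    using sect_offsetE[OF assms(3)] assms(2) by metis
  obtain j b where j: "j < m" "b < r ! j" "q = off r j + b"
    using sect_offsetE[OF assms(4)] assms(2) by metis
  show ?thesis
    using assms(1,2) i j by (simp add: sect_shift_off iso_moves_def)
qed

lemma sect_shift_imp_iso_moves:
  assumes "length r = m" "length r' = m" "\<forall>i<m. r' ! \<rho> i = r ! i"
    and "\<forall>p q. \<not> (p < sum_list r' \<and> q < sum_list r') \<longrightarrow> D' p q = 0"
    and "\<forall>p<sum_list r. \<forall>q<sum_list r. D' (sect_shift r r' \<rho> p) (sect_shift r r' \<rho> q) = D p q"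
  shows "iso_moves m \<rho> r D r' D'"
  unfolding iso_moves_def
proof (intro conjI allI impI)
  fix i j a b assume "i < m" "j < m" "a < r ! i" "b < r ! j"
  then show "D' (off r' (\<rho> i) + a) (off r' (\<rho> j) + b) = D (off r i + a) (off r j + b)"
    using assms(1,5) off_add_less_sum_list sect_shift_off by metis
qed (use assms in auto)

lemma sect_equivE:
  assumes "sect_equiv m r D D'" "length r = m"
  obtains \<sigma> where "bij_betw \<sigma> {..<sum_list r} {..<sum_list r}" "sect_bij m r r id \<sigma>"
    "\<forall>p<sum_list r. \<forall>q<sum_list r. D' p q = D (\<sigma> p) (\<sigma> q)"
proof -
  obtain \<sigma> where \<sigma>: "bij_betw \<sigma> {..<sum_list r} {..<sum_list r}"
    "\<forall>i<m. \<sigma> ` sect r i = sect r i"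
    and D': "\<forall>p q. D' p q = (if p < sum_list r \<and> q < sum_list r then D (\<sigma> p) (\<sigma> q) else 0)"
    using assms(1) unfolding sect_equiv_def by blast
  have "sect_bij m r r id \<sigma>"
    unfolding sect_bij_def using bij_betw_subset[OF \<sigma>(1) sect_subset] \<sigma>(2) assms(2) by simp
  then show ?thesis
    using that \<sigma>(1) D' by simp
qed

lemma sect_equiv_inv:
  assumes "sect_equiv m r D D'" "length r = m"
  obtains \<sigma> where "sect_bij m r r id \<sigma>"
    "\<forall>p<sum_list r. \<forall>q<sum_list r. D p q = D' (\<sigma> p) (\<sigma> q)"
proof -
  obtain \<sigma>0 where \<sigma>0: "bij_betw \<sigma>0 {..<sum_list r} {..<sum_list r}" "sect_bij m r r id \<sigma>0"
    and D': "\<forall>p<sum_list r. \<forall>q<sum_list r. D' p q = D (\<sigma>0 p) (\<sigma>0 q)"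
    using sect_equivE[OF assms] .
  define \<sigma> where "\<sigma> = inv_into {..<sum_list r} \<sigma>0"
  have "sect_bij m r r id \<sigma>"
    unfolding sect_bij_def \<sigma>_def using sect_bij_inv_into[OF \<sigma>0(1) assms(2) \<sigma>0(2)] by simp
  moreover have "\<sigma> p < sum_list r \<and> \<sigma>0 (\<sigma> p) = p" if "p < sum_list r" for p
    using that bij_betw_apply[OF bij_betw_inv_into[OF \<sigma>0(1)]]
      bij_betw_inv_into_right[OF \<sigma>0(1)] by (simp add: \<sigma>_def)
  ultimately show ?thesis
    using that D' by simp
qed

lemma sect_equiv_sect_bij:
  assumes "length r = m" "sect_bij m r r id \<sigma>"
  shows "sect_equiv m r D (\<lambda>p q. if p < sum_list r \<and> q < sum_list r then D (\<sigma> p) (\<sigma> q) else 0)"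
proof -
  have "\<sigma> ` sect r i = sect r i" if "i < m" for i
    using assms(2) that bij_betw_imp_surj_on unfolding sect_bij_def by fastforce
  then show ?thesis
    unfolding sect_equiv_def using sect_bij_bij_betw[OF assms(1) assms(1) bij_betw_id assms(2)]
    by blast
qed

lemma target_rel_imp_sect_bij:
  assumes "target_rel m dX r D r' D'" "length r = m"
  obtains \<rho> \<pi> where "isoX m dX \<rho>" "length r' = m" "sect_bij m r r' \<rho> \<pi>"
    "\<forall>p<sum_list r. \<forall>q<sum_list r. D' (\<pi> p) (\<pi> q) = D p q"
proof -
  let ?n = "sum_list r" and ?n' = "sum_list r'"
  obtain \<rho> D1 D2 where \<rho>: "isoX m dX \<rho>" and S1: "sect_equiv m r D D1"
    and S2: "sect_equiv m r' D' D2" and M: "iso_moves m \<rho> r D1 r' D2"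
    using assms(1) unfolding target_rel_def by blast
  have len': "length r' = m" and rr: "\<forall>i<m. r' ! \<rho> i = r ! i"
    using M unfolding iso_moves_def by auto
  obtain \<sigma>1 where \<sigma>1: "sect_bij m r r id \<sigma>1"
    and D1: "\<forall>p<?n. \<forall>q<?n. D p q = D1 (\<sigma>1 p) (\<sigma>1 q)"
    using sect_equiv_inv[OF S1 assms(2)] .
  obtain \<sigma>2 where \<sigma>2: "sect_bij m r' r' id \<sigma>2"
    and D2: "\<forall>p<?n'. \<forall>q<?n'. D2 p q = D' (\<sigma>2 p) (\<sigma>2 q)"
    using sect_equivE[OF S2 len'] .
  have \<rho>b: "bij_betw \<rho> {..<m} {..<m}"
    using \<rho> by (simp add: isoX_def)
  define \<tau> where "\<tau> = sect_shift r r' \<rho>"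
  have \<tau>: "sect_bij m r r' \<rho> \<tau>"
    unfolding \<tau>_def using sect_bij_sect_shift assms(2) rr by blast
  define \<pi> where "\<pi> = \<sigma>2 \<circ> \<tau> \<circ> \<sigma>1"
  have "sect_bij m r r' \<rho> \<pi>"
    using sect_bij_comp[OF sect_bij_comp[OF \<sigma>1 \<tau>] \<sigma>2] bij_betw_apply[OF \<rho>b]
    by (simp add: \<pi>_def comp_assoc)
  moreover have "D' (\<pi> p) (\<pi> q) = D p q" if "p < ?n" "q < ?n" for p q
  proof -
    have "\<sigma>1 p < ?n" "\<sigma>1 q < ?n"
      using that bij_betw_apply[OF sect_bij_bij_betw[OF assms(2) assms(2) bij_betw_id \<sigma>1]]
      by simp_all
    moreover from this have "\<tau> (\<sigma>1 p) < ?n'" "\<tau> (\<sigma>1 q) < ?n'"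
      using bij_betw_apply[OF sect_bij_bij_betw[OF assms(2) len' \<rho>b \<tau>]] by simp_all
    ultimately have "D' (\<pi> p) (\<pi> q) = D2 (\<tau> (\<sigma>1 p)) (\<tau> (\<sigma>1 q))"
      using D2 by (simp add: \<pi>_def)
    also have "\<dots> = D1 (\<sigma>1 p) (\<sigma>1 q)"
      unfolding \<tau>_def using iso_moves_sect_shift[OF M assms(2)] \<open>\<sigma>1 p < ?n\<close> \<open>\<sigma>1 q < ?n\<close> .
    finally show ?thesis
      using D1 that by simp
  qed
  ultimately show ?thesis
    using that \<rho> len' by blast
qed

lemma sect_bij_comp_inv_into:
  assumes "length r = m" "length r' = m" "bij_betw \<rho> {..<m} {..<m}"
    and \<pi>: "sect_bij m r r' \<rho> \<pi>" and \<tau>: "sect_bij m r r' \<rho> \<tau>"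
  shows "sect_bij m r' r' id (\<pi> \<circ> inv_into {..<sum_list r} \<tau>)"
  unfolding sect_bij_def
proof (intro allI impI)
  fix j assume "j < m"
  then obtain i where i: "i < m" "j = \<rho> i"
    using bij_betw_imp_surj_on[OF assms(3)] by (metis imageE lessThan_iff)
  have "bij_betw (inv_into {..<sum_list r} \<tau>) (sect r' (\<rho> i)) (sect r i)"
    using sect_bij_inv_into[OF sect_bij_bij_betw[OF assms(1-3) \<tau>] assms(1) \<tau> i(1)] .
  then show "bij_betw (\<pi> \<circ> inv_into {..<sum_list r} \<tau>) (sect r' j) (sect r' (id j))"
    using \<pi> i by (simp add: sect_bij_def bij_betw_trans)
qed

lemma sect_bij_imp_target_rel:
  assumes len: "length r = m" "length r' = m" and \<rho>: "isoX m dX \<rho>"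
    and \<pi>: "sect_bij m r r' \<rho> \<pi>"
    and D: "\<forall>p<sum_list r. \<forall>q<sum_list r. D' (\<pi> p) (\<pi> q) = D p q"
  shows "target_rel m dX r D r' D'"
proof -
  let ?n = "sum_list r" and ?n' = "sum_list r'"
  have \<rho>b: "bij_betw \<rho> {..<m} {..<m}"
    using \<rho> by (simp add: isoX_def)
  have rr: "\<forall>i<m. r' ! \<rho> i = r ! i"
    using sect_bij_nth[OF \<pi>] by blast
  define \<tau> where "\<tau> = sect_shift r r' \<rho>"
  have \<tau>: "sect_bij m r r' \<rho> \<tau>"
    unfolding \<tau>_def using sect_bij_sect_shift len(1) rr by blast
  have \<tau>b: "bij_betw \<tau> {..<?n} {..<?n'}"
    using sect_bij_bij_betw[OF len \<rho>b \<tau>] .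
  define \<sigma> where "\<sigma> = \<pi> \<circ> inv_into {..<?n} \<tau>"
  have \<sigma>: "sect_bij m r' r' id \<sigma>"
    unfolding \<sigma>_def using sect_bij_comp_inv_into[OF len \<rho>b \<pi> \<tau>] .
  define D1 where "D1 = (\<lambda>p q. if p < ?n \<and> q < ?n then D (id p) (id q) else 0)"
  define D2 where "D2 = (\<lambda>p q. if p < ?n' \<and> q < ?n' then D' (\<sigma> p) (\<sigma> q) else 0)"
  have "D2 (\<tau> p) (\<tau> q) = D1 p q" if "p < ?n" "q < ?n" for p q
  proof -
    have "\<tau> p < ?n'" "\<tau> q < ?n'" "\<sigma> (\<tau> p) = \<pi> p" "\<sigma> (\<tau> q) = \<pi> q"
      using that bij_betw_apply[OF \<tau>b] bij_betw_inv_into_left[OF \<tau>b] by (simp_all add: \<sigma>_def)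
    then show ?thesis
      using D that by (simp add: D1_def D2_def)
  qed
  then have "iso_moves m \<rho> r D1 r' D2"
    unfolding \<tau>_def by (intro sect_shift_imp_iso_moves) (simp_all add: len rr D2_def)
  moreover have "sect_equiv m r D D1"
    unfolding D1_def by (rule sect_equiv_sect_bij[OF len(1)]) (auto simp: sect_bij_def bij_betw_def)
  moreover have "sect_equiv m r' D' D2"
    unfolding D2_def by (rule sect_equiv_sect_bij[OF len(2) \<sigma>])
  ultimately show ?thesis
    unfolding target_rel_def using \<rho> by blast
qed

lemma length_fiber_sizes [simp]: "length (fiber_sizes m Y f) = m"
  by (simp add: fiber_sizes_def)

lemma nth_fiber_sizes: "i < m \<Longrightarrow> fiber_sizes m Y f ! i = card {y\<in>Y. f y = i}"
  by (simp add: fiber_sizes_def)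

lemma labelling_bij_betw:
  "labelling m Y f l \<Longrightarrow> bij_betw l {..<sum_list (fiber_sizes m Y f)} Y"
  by (simp add: labelling_def)

lemma labelling_sect:
  assumes "labelling m Y f l" "i < m"
  shows "bij_betw l (sect (fiber_sizes m Y f) i) {y\<in>Y. f y = i}"
  using assms bij_betw_subset[OF labelling_bij_betw[OF assms(1)] sect_subset]
  by (simp add: labelling_def)

lemma labelling_inv_into_sect:
  assumes "labelling m Y f l" "i < m"
  shows "bij_betw (inv_into {..<sum_list (fiber_sizes m Y f)} l) {y\<in>Y. f y = i}
           (sect (fiber_sizes m Y f) i)"
  using assms bij_betw_inv_into_subset[OF labelling_bij_betw[OF assms(1)] sect_subset]
  by (simp add: labelling_def)

lemma bij_betw_fibre:
  assumes h: "bij_betw h Y Y'" and k: "inj_on k {..<m}" and f: "f ` Y \<subseteq> {..<m}"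
    and hk: "\<forall>y\<in>Y. k (f y) = f' (h y)" and i: "i < m"
  shows "bij_betw h {y\<in>Y. f y = i} {y\<in>Y'. f' y = k i}"
proof (rule bij_betw_subset[OF h])
  show "h ` {y\<in>Y. f y = i} = {y\<in>Y'. f' y = k i}"
  proof
    show "h ` {y\<in>Y. f y = i} \<subseteq> {y\<in>Y'. f' y = k i}"
      using h hk by (auto simp: bij_betw_def)
    show "{y\<in>Y'. f' y = k i} \<subseteq> h ` {y\<in>Y. f y = i}"
    proof
      fix z assume z: "z \<in> {y\<in>Y'. f' y = k i}"
      then obtain y where y: "y \<in> Y" "z = h y"
        using h by (auto simp: bij_betw_def)
      then have "k (f y) = k i"
        using hk z by simp
      then have "f y = i"
        using k f y(1) i by (auto simp: inj_on_def)
      then show "z \<in> h ` {y\<in>Y. f y = i}"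
        using y by blast
    qed
  qed
qed auto

lemma line_equiv_imp_sect_bij:
  assumes L: "is_line m Y dY f" and l: "labelling m Y f l"
    and l': "labelling m Y' f' l'" and E: "line_equiv m dX Y dY f Y' dY' f'"
  defines "r \<equiv> fiber_sizes m Y f" and "r' \<equiv> fiber_sizes m Y' f'"
  obtains \<rho> \<pi> where "isoX m dX \<rho>" "sect_bij m r r' \<rho> \<pi>"
    "\<forall>p<sum_list r. \<forall>q<sum_list r.
       dist_matrix (sum_list r') dY' l' (\<pi> p) (\<pi> q) = dist_matrix (sum_list r) dY l p q"
proof -
  let ?n = "sum_list r" and ?n' = "sum_list r'"
  obtain h k where h: "bij_betw h Y Y'" and hd: "\<forall>y\<in>Y. \<forall>z\<in>Y. dY' (h y) (h z) = dY y z"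
    and k: "isoX m dX k" and hk: "\<forall>y\<in>Y. k (f y) = f' (h y)"
    using E unfolding line_equiv_def by blast
  have kb: "bij_betw k {..<m} {..<m}"
    using k by (simp add: isoX_def)
  define \<pi> where "\<pi> = inv_into {..<?n'} l' \<circ> h \<circ> l"
  have "bij_betw \<pi> (sect r i) (sect r' (k i))" if i: "i < m" for i
  proof -
    have "bij_betw h {y\<in>Y. f y = i} {y\<in>Y'. f' y = k i}"
      using kb L h hk i by (intro bij_betw_fibre) (simp_all add: bij_betw_def is_line_def)
    moreover have "k i < m"
      using bij_betw_apply[OF kb] i by simp
    ultimately show ?thesis
      unfolding \<pi>_def r_def r'_def
      using labelling_sect[OF l i] labelling_inv_into_sect[OF l'] by (meson bij_betw_trans)
  qed
  then have \<pi>: "sect_bij m r r' k \<pi>"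
    by (simp add: sect_bij_def)
  have l: "l p \<in> Y" if "p < ?n" for p
    using that bij_betw_apply[OF labelling_bij_betw[OF l]] by (simp add: r_def)
  have l'\<pi>: "\<pi> p < ?n' \<and> l' (\<pi> p) = h (l p)" if "p < ?n" for p
    using bij_betw_apply[OF h l[OF that]]
      bij_betw_apply[OF bij_betw_inv_into[OF labelling_bij_betw[OF l']]]
      bij_betw_inv_into_right[OF labelling_bij_betw[OF l']]
    by (simp add: \<pi>_def r'_def)
  have "dist_matrix ?n' dY' l' (\<pi> p) (\<pi> q) = dist_matrix ?n dY l p q"
    if "p < ?n" "q < ?n" for p q
    using that l'\<pi> hd l by (simp add: dist_matrix_def)
  then show ?thesis
    using that k \<pi> by blast
qed

lemma labelling_conj_sect_bij:
  assumes l: "labelling m Y f l" and l': "labelling m Y' f' l'"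
    and \<pi>: "sect_bij m (fiber_sizes m Y f) (fiber_sizes m Y' f') \<rho> \<pi>" and "i < m" "\<rho> i < m"
  shows "bij_betw (l' \<circ> \<pi> \<circ> inv_into {..<sum_list (fiber_sizes m Y f)} l)
           {y\<in>Y. f y = i} {y\<in>Y'. f' y = \<rho> i}"
  using labelling_inv_into_sect[OF l] labelling_sect[OF l'] \<pi> assms(4,5)
  unfolding sect_bij_def comp_assoc by (meson bij_betw_trans)

lemma sect_bij_imp_line_equiv:
  assumes L: "is_line m Y dY f" and l: "labelling m Y f l" and l': "labelling m Y' f' l'"
  defines "r \<equiv> fiber_sizes m Y f" and "r' \<equiv> fiber_sizes m Y' f'"
  assumes \<rho>: "isoX m dX \<rho>" and \<pi>: "sect_bij m r r' \<rho> \<pi>"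
    and D: "\<forall>p<sum_list r. \<forall>q<sum_list r.
       dist_matrix (sum_list r') dY' l' (\<pi> p) (\<pi> q) = dist_matrix (sum_list r) dY l p q"
  shows "line_equiv m dX Y dY f Y' dY' f'"
proof -
  let ?n = "sum_list r" and ?n' = "sum_list r'"
  have \<rho>b: "bij_betw \<rho> {..<m} {..<m}"
    using \<rho> by (simp add: isoX_def)
  have \<pi>b: "bij_betw \<pi> {..<?n} {..<?n'}"
    using sect_bij_bij_betw[OF _ _ \<rho>b \<pi>] by (simp add: r_def r'_def)
  have lb: "bij_betw l {..<?n} Y" and lb': "bij_betw l' {..<?n'} Y'"
    using labelling_bij_betw l l' by (simp_all add: r_def r'_def)
  define h where "h = l' \<circ> \<pi> \<circ> inv_into {..<?n} l"
  have hb: "bij_betw h Y Y'"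
    unfolding h_def comp_assoc
    by (rule bij_betw_trans[OF bij_betw_trans[OF bij_betw_inv_into[OF lb] \<pi>b] lb'])
  have "dY' (h y) (h z) = dY y z" if "y \<in> Y" "z \<in> Y" for y z
  proof -
    have "y \<in> l ` {..<?n}" "z \<in> l ` {..<?n}"
      using that bij_betw_imp_surj_on[OF lb] by simp_all
    then obtain p q where pq: "p < ?n" "q < ?n" "y = l p" "z = l q"
      by blast
    moreover have "h (l p) = l' (\<pi> p)" "h (l q) = l' (\<pi> q)"
      using pq bij_betw_inv_into_left[OF lb] by (simp_all add: h_def)
    moreover have "\<pi> p < ?n'" "\<pi> q < ?n'"
      using pq bij_betw_apply[OF \<pi>b] by simp_all
    moreover have "dist_matrix ?n' dY' l' (\<pi> p) (\<pi> q) = dist_matrix ?n dY l p q"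
      using D pq by blast
    ultimately show ?thesis
      by (simp add: dist_matrix_def)
  qed
  moreover have "\<rho> (f y) = f' (h y)" if y: "y \<in> Y" for y
  proof -
    have "f y < m" "\<rho> (f y) < m"
      using L y bij_betw_apply[OF \<rho>b] by (auto simp: is_line_def)
    then have "h y \<in> {z\<in>Y'. f' z = \<rho> (f y)}"
      using bij_betw_apply[OF labelling_conj_sect_bij[OF l l']] \<pi> y
      by (simp add: h_def r_def r'_def)
    then show ?thesis
      by simp
  qed
  ultimately show ?thesis
    unfolding line_equiv_def using hb \<rho> by blast
qed

lemma line_equiv_iff_target_rel:
  assumes L: "is_line m Y dY f" and l: "labelling m Y f l"
    and L': "is_line m Y' dY' f'" and l': "labelling m Y' f' l'"
  shows "line_equiv m dX Y dY f Y' dY' f' \<longleftrightarrow>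
    target_rel m dX
      (fiber_sizes m Y f) (dist_matrix (sum_list (fiber_sizes m Y f)) dY l)
      (fiber_sizes m Y' f') (dist_matrix (sum_list (fiber_sizes m Y' f')) dY' l')"
proof
  assume "line_equiv m dX Y dY f Y' dY' f'"
  then obtain \<rho> \<pi> where "isoX m dX \<rho>" "sect_bij m (fiber_sizes m Y f) (fiber_sizes m Y' f') \<rho> \<pi>"
    "\<forall>p<sum_list (fiber_sizes m Y f). \<forall>q<sum_list (fiber_sizes m Y f).
       dist_matrix (sum_list (fiber_sizes m Y' f')) dY' l' (\<pi> p) (\<pi> q) =
       dist_matrix (sum_list (fiber_sizes m Y f)) dY l p q"
    by (rule line_equiv_imp_sect_bij[OF L l l'])
  then show "target_rel m dX
      (fiber_sizes m Y f) (dist_matrix (sum_list (fiber_sizes m Y f)) dY l)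
      (fiber_sizes m Y' f') (dist_matrix (sum_list (fiber_sizes m Y' f')) dY' l')"
    by (intro sect_bij_imp_target_rel) simp_all
next
  assume "target_rel m dX
      (fiber_sizes m Y f) (dist_matrix (sum_list (fiber_sizes m Y f)) dY l)
      (fiber_sizes m Y' f') (dist_matrix (sum_list (fiber_sizes m Y' f')) dY' l')"
  then obtain \<rho> \<pi> where "isoX m dX \<rho>" "sect_bij m (fiber_sizes m Y f) (fiber_sizes m Y' f') \<rho> \<pi>"
    "\<forall>p<sum_list (fiber_sizes m Y f). \<forall>q<sum_list (fiber_sizes m Y f).
       dist_matrix (sum_list (fiber_sizes m Y' f')) dY' l' (\<pi> p) (\<pi> q) =
       dist_matrix (sum_list (fiber_sizes m Y f)) dY l p q"
    by (rule target_rel_imp_sect_bij) simp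
  then show "line_equiv m dX Y dY f Y' dY' f'"
    by (rule sect_bij_imp_line_equiv[OF L l l'])
qed

lemma labelling_exists:
  assumes "finite Y" and f: "f ` Y \<subseteq> {..<m}"
  shows "\<exists>l. labelling m Y f l"
proof -
  let ?r = "fiber_sizes m Y f" and ?F = "\<lambda>i. {y\<in>Y. f y = i}"
  have "\<exists>g. bij_betw g (sect ?r i) (?F i)" if "i < m" for i
    using finite_same_card_bij[of "sect ?r i" "?F i"] assms(1) that
    by (simp add: nth_fiber_sizes sect_def)
  then obtain g where g: "\<And>i. i < m \<Longrightarrow> bij_betw (g i) (sect ?r i) (?F i)"
    by metis
  define l where "l p = g (sect_index ?r p) p" for p
  have l: "bij_betw l (sect ?r i) (?F i)" if "i < m" for i
  proof -
    have "l p = g i p" if "p \<in> sect ?r i" for p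
      using sect_index_eq[OF _ that] \<open>i < m\<close> by (simp add: l_def)
    then show ?thesis
      by (rule bij_betw_cong[THEN iffD2, OF _ g[OF that]])
  qed
  have "disjoint_family_on ?F {..<m}"
    by (auto simp: disjoint_family_on_def)
  then have "bij_betw l (\<Union>i<m. sect ?r i) (\<Union>i<m. ?F i)"
    using l by (intro bij_betw_UNION_disjoint) auto
  moreover have "(\<Union>i<m. ?F i) = Y"
    using f by auto
  ultimately have "bij_betw l {..<sum_list ?r} Y"
    using UN_sect[of ?r] by simp
  then have "labelling m Y f l"
    unfolding labelling_def using l bij_betw_imp_surj_on by blast
  then show ?thesis
    by blast
qed

lemma dist_matrix_in_Met:
  assumes d: "metric_on Y d" and l: "bij_betw l {..<n} Y"
  shows "dist_matrix n d l \<in> Met n"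
proof -
  have "l p \<in> Y" if "p < n" for p
    using bij_betw_apply[OF l] that by simp
  moreover have "l p \<noteq> l q" if "p < n" "q < n" "p \<noteq> q" for p q
    using l that by (auto simp: bij_betw_def inj_on_def)
  ultimately show ?thesis
    using d unfolding Met_def dist_matrix_def metric_on_def by auto
qed

lemma target_elem_dist_matrix:
  assumes L: "is_line m Y dY f" and l: "labelling m Y f l"
  shows "target_elem m (fiber_sizes m Y f) (dist_matrix (sum_list (fiber_sizes m Y f)) dY l)"
proof -
  have "fiber_sizes m Y f ! i \<ge> 1" if "i < m" for i
  proof -
    have "i \<in> f ` Y" "finite Y"
      using L that by (simp_all add: is_line_def)
    then have "{y\<in>Y. f y = i} \<noteq> {}" "finite {y\<in>Y. f y = i}"
      by auto
    then show ?thesis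
      using that by (simp add: nth_fiber_sizes Suc_le_eq card_gt_0_iff)
  qed
  moreover have "dist_matrix (sum_list (fiber_sizes m Y f)) dY l \<in> Met (sum_list (fiber_sizes m Y f))"
    using L dist_matrix_in_Met[OF _ labelling_bij_betw[OF l]] by (simp add: is_line_def)
  ultimately show ?thesis
    by (simp add: target_elem_def)
qed

lemma Met_imp_metric_on: "D \<in> Met n \<Longrightarrow> metric_on {..<n} D"
  unfolding Met_def metric_on_def by auto

lemma target_elem_has_line:
  assumes T: "target_elem m r D"
  shows "\<exists>(Y::nat set) dY f l. is_line m Y dY f \<and> labelling m Y f l \<and>
    target_rel m dX (fiber_sizes m Y f) (dist_matrix (sum_list (fiber_sizes m Y f)) dY l) r D"
proof -
  let ?n = "sum_list r"
  have len: "length r = m" and r: "\<forall>i<m. r ! i \<ge> 1" and D: "D \<in> Met ?n"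
    using T by (simp_all add: target_elem_def)
  have fibre: "{p\<in>{..<?n}. sect_index r p = i} = sect r i" if "i < m" for i
    using that len sect_index sect_index_eq sect_subset by blast
  have "fiber_sizes m {..<?n} (sect_index r) ! i = r ! i" if "i < m" for i
    using that by (simp only: nth_fiber_sizes fibre card_sect)
  then have fs: "fiber_sizes m {..<?n} (sect_index r) = r"
    by (intro nth_equalityI) (simp_all add: len)
  have "sect_index r ` {..<?n} = {..<m}"
  proof
    show "sect_index r ` {..<?n} \<subseteq> {..<m}"
      using sect_index len by auto
    show "{..<m} \<subseteq> sect_index r ` {..<?n}"
    proof
      fix i assume "i \<in> {..<m}"
      then have "off r i \<in> {p\<in>{..<?n}. sect_index r p = i}"
        using fibre r by (auto simp: sect_def)
      then show "i \<in> sect_index r ` {..<?n}"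
        by (metis (mono_tags, lifting) imageI mem_Collect_eq)
    qed
  qed
  then have "is_line m {..<?n} D (sect_index r)"
    using Met_imp_metric_on[OF D] by (simp add: is_line_def)
  moreover have "labelling m {..<?n} (sect_index r) id"
    unfolding labelling_def fs using fibre by simp
  moreover have "target_rel m dX r (dist_matrix ?n D id) r D"
    by (rule sect_bij_imp_target_rel[where \<rho> = id and \<pi> = id])
      (simp_all add: len isoX_def sect_bij_def dist_matrix_def)
  ultimately show ?thesis
    using fs by metis
qed

theorem proposition3p6:
  fixes m :: nat and dX :: "nat \<Rightarrow> nat \<Rightarrow> real"
  assumes X: "metric_on {..<m} dX"
  shows
    \<comment> \<open>every line admits a labelling as described\<close>
    "(\<forall>(Y::'a set) dY f. is_line m Y dY f \<longrightarrow> (\<exists>l. labelling m Y f l))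
     \<comment> \<open>the resulting matrix lies in the component indexed by (r_1,...,r_m)\<close>
   \<and> (\<forall>(Y::'a set) dY f l. is_line m Y dY f \<and> labelling m Y f l \<longrightarrow>
        target_elem m (fiber_sizes m Y f)
          (dist_matrix (sum_list (fiber_sizes m Y f)) dY l))
     \<comment> \<open>well-defined: independent of labelling and of the representative of the line\<close>
   \<and> (\<forall>(Y::'a set) dY f l (Y'::'b set) dY' f' l'.
        is_line m Y dY f \<and> labelling m Y f l \<and>
        is_line m Y' dY' f' \<and> labelling m Y' f' l' \<and>
        line_equiv m dX Y dY f Y' dY' f' \<longrightarrow>
        target_rel m dX
          (fiber_sizes m Y f) (dist_matrix (sum_list (fiber_sizes m Y f)) dY l)
          (fiber_sizes m Y' f') (dist_matrix (sum_list (fiber_sizes m Y' f')) dY' l'))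
     \<comment> \<open>injective\<close>
   \<and> (\<forall>(Y::'a set) dY f l (Y'::'b set) dY' f' l'.
        is_line m Y dY f \<and> labelling m Y f l \<and>
        is_line m Y' dY' f' \<and> labelling m Y' f' l' \<and>
        target_rel m dX
          (fiber_sizes m Y f) (dist_matrix (sum_list (fiber_sizes m Y f)) dY l)
          (fiber_sizes m Y' f') (dist_matrix (sum_list (fiber_sizes m Y' f')) dY' l') \<longrightarrow>
        line_equiv m dX Y dY f Y' dY' f')
     \<comment> \<open>surjective\<close>
   \<and> (\<forall>r D. target_elem m r D \<longrightarrow>
        (\<exists>(Y::nat set) dY f l. is_line m Y dY f \<and> labelling m Y f l \<and>
           target_rel m dX
             (fiber_sizes m Y f) (dist_matrix (sum_list (fiber_sizes m Y f)) dY l) r D))"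
proof (intro conjI allI impI; (elim conjE)?)
  fix Y :: "'a set" and dY f
  assume "is_line m Y dY f"
  then show "\<exists>l. labelling m Y f l"
    by (intro labelling_exists) (simp_all add: is_line_def)
qed (simp_all add: target_elem_dist_matrix line_equiv_iff_target_rel, metis target_elem_has_line)

end
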